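(* Let $u,w$ be words over $\{L,R\}$. If $w$ starts with $L$ and $Lu$ is derivable from $w$, then $LLu$ is derivable from $Lw$. Dually, if $w$ starts with $R$ and $Ru$ is derivable from $w$, then $RRu$ is derivable from $Rw$.
   Context: Words are finite strings (including the empty word) over $\{L,R\}$. A word $u$ is derivable from $w$ if it is obtained from $w$ by finitely many successive applications (in any order) of the following rules, where $v,v'$ denote arbitrary words: (1) $vRRv'\Rightarrow vRv'$; (1') $vLLv'\Rightarrow vLv'$; (2) $vLRv'\Rightarrow vv'$; (2') $vRLv'\Rightarrow vv'$; (3) $vv'\Rightarrow v'$ (tail formation). *)

theory Defs
  imports Main
begin

datatype letter = L | R

type_synonym word = "letter list"

inductive step :: "word \<Rightarrow> word \<Rightarrow> bool" where
  rule1:  "step (v @ [R, R] @ v') (v @ [R] @ v')"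
| rule1': "step (v @ [L, L] @ v') (v @ [L] @ v')"
| rule2:  "step (v @ [L, R] @ v') (v @ v')"
| rule2': "step (v @ [R, L] @ v') (v @ v')"
| rule3:  "step (v @ v') v'"

definition derivable :: "word \<Rightarrow> word \<Rightarrow> bool" where
  "derivable u w \<longleftrightarrow> step\<^sup>*\<^sup>* w u"

end

theory Submission
  imports Defs "HOL-Library.Sublist"
begin

text \<open>
  Tail formation can always be performed first: if \<open>u\<close> is derivable from \<open>w\<close>, then
  \<open>w = p s\<close> where \<open>u\<close> is obtained from the suffix \<open>s\<close> by the local rules (1), (1'), (2),
  (2') alone, and local derivations may be prefixed by any word. Moreover \<open>c c x\<close> reduces
  locally to \<open>c\<close> for every letter \<open>c\<close> and word \<open>x\<close>. Hence, if \<open>w\<close> starts with \<open>c\<close> and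
  \<open>c u\<close> is derivable from \<open>w = p s\<close>, the prefix \<open>c p\<close> of \<open>c w\<close> collapses to \<open>c\<close>, and
  \<open>c s\<close> reduces locally to \<open>c c u\<close>.
\<close>

inductive local_step :: "word \<Rightarrow> word \<Rightarrow> bool" where
  contract: "local_step (v @ [c, c] @ v') (v @ [c] @ v')"
| cancel: "c \<noteq> d \<Longrightarrow> local_step (v @ [c, d] @ v') (v @ v')"

lemma local_step_imp_step: "local_step x y \<Longrightarrow> step x y"
proof (induction rule: local_step.induct)
  case (contract v c v')
  show ?case using step.rule1[of v v'] step.rule1'[of v v'] by (cases c) simp_all
next
  case (cancel c d v v')
  then show ?case using step.rule2[of v v'] step.rule2'[of v v'] by (cases c; cases d) simp_all
qed

lemma local_steps_imp_steps: "local_step\<^sup>*\<^sup>* x y \<Longrightarrow> step\<^sup>*\<^sup>* x y"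
  using mono_rtranclp[of local_step step] local_step_imp_step by blast

lemma step_local_or_tail: "step x y \<Longrightarrow> local_step x y \<or> (\<exists>v. x = v @ y)"
proof (induction rule: step.induct)
  case (rule1 v v')
  then show ?case using local_step.contract[of v R v'] by simp
next
  case (rule1' v v')
  then show ?case using local_step.contract[of v L v'] by simp
next
  case (rule2 v v')
  then show ?case using local_step.cancel[of L R v v'] by simp
next
  case (rule2' v v')
  then show ?case using local_step.cancel[of R L v v'] by simp
qed blast

lemma local_step_append_left: "local_step x y \<Longrightarrow> local_step (a @ x) (a @ y)"
  by (induction rule: local_step.induct)
    (use local_step.contract[of "a @ _"] local_step.cancel[of _ _ "a @ _"] in auto)

lemma local_step_append_right: "local_step x y \<Longrightarrow> local_step (x @ b) (y @ b)"
  by (induction rule: local_step.induct)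
    (use local_step.contract[of _ _ "_ @ b"] local_step.cancel[of _ _ _ "_ @ b"] in auto)

lemma local_steps_append_left: "local_step\<^sup>*\<^sup>* x y \<Longrightarrow> local_step\<^sup>*\<^sup>* (a @ x) (a @ y)"
  by (induction rule: rtranclp_induct)
    (auto intro: rtranclp.rtrancl_into_rtrancl local_step_append_left)

lemma local_steps_append_right: "local_step\<^sup>*\<^sup>* x y \<Longrightarrow> local_step\<^sup>*\<^sup>* (x @ b) (y @ b)"
  by (induction rule: rtranclp_induct)
    (auto intro: rtranclp.rtrancl_into_rtrancl local_step_append_right)

lemma append_eq_append_short_middle:
  assumes "a @ r @ b = v @ v'" and "length r \<le> 1"
  shows "(\<exists>us. a = v @ us \<and> v' = us @ r @ b) \<or> suffix v' b"
proof -
  obtain us where "a = v @ us \<and> us @ r @ b = v' \<or> a @ us = v \<and> r @ b = us @ v'"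
    using append_eq_append_conv2[THEN iffD1, OF assms(1)] by blast
  then show ?thesis
  proof (elim disjE conjE)
    assume "a @ us = v" and r_b: "r @ b = us @ v'"
    show ?thesis
    proof (cases us)
      case Nil
      then show ?thesis using \<open>a @ us = v\<close> r_b by simp
    next
      case (Cons x us')
      then show ?thesis using r_b assms(2) by (cases r) (auto simp: suffix_def)
    qed
  qed blast
qed

lemma local_step_suffix:
  assumes "local_step y z" and "suffix v' z"
  shows "\<exists>y'. suffix y' y \<and> local_step\<^sup>=\<^sup>= y' v'"
proof -
  have redex_suffix: "\<exists>y'. suffix y' (a @ p @ b) \<and> local_step\<^sup>=\<^sup>= y' v'"
    if redex: "\<And>us. local_step (us @ p @ b) (us @ r @ b)"
      and "length r \<le> 1" and "a @ r @ b = v @ v'" for a p r b v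
    using append_eq_append_short_middle[OF that(3,2)]
  proof (elim disjE exE conjE)
    fix us
    assume "a = v @ us" and "v' = us @ r @ b"
    then have "suffix (us @ p @ b) (a @ p @ b)" and "local_step (us @ p @ b) v'"
      using redex by (auto simp: suffix_def)
    then show ?thesis by blast
  next
    assume "suffix v' b"
    then have "suffix v' (a @ p @ b)" by (auto intro: suffix_appendI)
    then show ?thesis by blast
  qed
  from assms(2) obtain v where "z = v @ v'"
    by (auto elim: suffixE)
  with assms(1) show ?thesis
  proof (induction rule: local_step.induct)
    case (contract a c b)
    then show ?case using redex_suffix[of "[c, c]" b "[c]"] local_step.contract by simp
  next
    case (cancel c d a b)
    then show ?case using redex_suffix[of "[c, d]" b "[]"] local_step.cancel by simp
  qed
qed

lemma local_steps_suffix: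
  "local_step\<^sup>*\<^sup>* x z \<Longrightarrow> suffix v' z \<Longrightarrow> \<exists>x'. suffix x' x \<and> local_step\<^sup>*\<^sup>* x' v'"
proof (induction arbitrary: v' rule: rtranclp_induct)
  case base
  then show ?case by blast
next
  case (step y z)
  obtain y' where "suffix y' y" and y'_v': "local_step\<^sup>=\<^sup>= y' v'"
    using local_step_suffix step.hyps(2) step.prems by blast
  then obtain x' where "suffix x' x" and "local_step\<^sup>*\<^sup>* x' y'"
    using step.IH by blast
  moreover from this(2) y'_v' have "local_step\<^sup>*\<^sup>* x' v'"
    by (auto intro: rtranclp.rtrancl_into_rtrancl)
  ultimately show ?case by blast
qed

lemma steps_tail_first: "step\<^sup>*\<^sup>* w z \<Longrightarrow> \<exists>s. suffix s w \<and> local_step\<^sup>*\<^sup>* s z"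
proof (induction rule: rtranclp_induct)
  case base
  then show ?case by blast
next
  case (step y z)
  then obtain s where s_w: "suffix s w" and s_y: "local_step\<^sup>*\<^sup>* s y"
    by blast
  from step_local_or_tail[OF step.hyps(2)] show ?case
  proof
    assume "local_step y z"
    then show ?thesis using s_w s_y by (auto intro: rtranclp.rtrancl_into_rtrancl)
  next
    assume "\<exists>v. y = v @ z"
    then have "suffix z y" by (auto simp: suffix_def)
    then obtain s' where "suffix s' s" and "local_step\<^sup>*\<^sup>* s' z"
      using local_steps_suffix[OF s_y] by blast
    then show ?thesis using s_w suffix_order.trans by blast
  qed
qed

lemma cons_local_steps_singleton_or_Nil:
  "local_step\<^sup>*\<^sup>* (c # x) [c] \<or> local_step\<^sup>*\<^sup>* (c # x) []"
proof (induction x arbitrary: c)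
  case Nil
  then show ?case by simp
next
  case (Cons d x)
  have "local_step\<^sup>*\<^sup>* [c, d] [c] \<or> local_step\<^sup>*\<^sup>* [c, d] []"
    using local_step.contract[of "[]" c "[]"] local_step.cancel[of c d "[]" "[]"] by auto
  moreover have "local_step\<^sup>*\<^sup>* (c # d # x) [c, d] \<or> local_step\<^sup>*\<^sup>* (c # d # x) [c]"
    using Cons.IH[of d] local_steps_append_left[of "d # x" _ "[c]"] by auto
  ultimately show ?case by (meson rtranclp_trans)
qed

lemma double_letter_absorbs: "local_step\<^sup>*\<^sup>* (c # c # x) [c]"
  using cons_local_steps_singleton_or_Nil[of c x]
    local_steps_append_left[of "c # x" _ "[c]"] local_step.contract[of "[]" c "[]"]
  by (auto intro: rtranclp.rtrancl_into_rtrancl)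

lemma derivable_double_letter:
  assumes "hd w = c" and "derivable (c # u) w"
  shows "derivable (c # c # u) (c # w)"
proof -
  obtain s where "suffix s w" and s_u: "local_step\<^sup>*\<^sup>* s (c # u)"
    using steps_tail_first assms(2) unfolding derivable_def by blast
  then obtain p where w: "w = p @ s"
    by (auto elim: suffixE)
  have "local_step\<^sup>*\<^sup>* (c # w) (c # s)"
  proof (cases p)
    case Nil
    then show ?thesis using w by simp
  next
    case (Cons d p')
    then have "c # w = (c # c # p') @ s"
      using w assms(1) by simp
    then show ?thesis
      using local_steps_append_right[OF double_letter_absorbs] by simp
  qed
  also have "local_step\<^sup>*\<^sup>* (c # s) (c # c # u)"
    using local_steps_append_left[OF s_u, of "[c]"] by simp
  finally show ?thesis
    unfolding derivable_def by (rule local_steps_imp_steps)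
qed

theorem mainTheorem8:
  fixes u w :: word
  shows "(hd w = L \<and> w \<noteq> [] \<and> derivable (L # u) w \<longrightarrow> derivable (L # L # u) (L # w))
       \<and> (hd w = R \<and> w \<noteq> [] \<and> derivable (R # u) w \<longrightarrow> derivable (R # R # u) (R # w))"
  using derivable_double_letter by blast

end
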